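(* Let $d\ge 1$ and $2\le n_1\le n_2\le\cdots\le n_d$ be integers, and let $G=K_{n_1}\times K_{n_2}\times\cdots\times K_{n_d}$. Then $\sigma_T(G)=2d-1$ if $n_1=2$, and $\sigma_T(G)=2d$ if $n_1\ge 3$.
   Context: $K_n$ is the complete graph on $n$ vertices and $\times$ is the Cartesian product of graphs. Thus $G$ has vertex set $\{(x_1,\dots,x_d): x_i\in\{0,1,\dots,n_i-1\}\}$, two vertices being adjacent iff they differ in exactly one coordinate (a Hamming graph). For a spanning tree $T$ of a connected graph $G$, $d_T(u,v)$ is the distance between $u$ and $v$ in $T$, $\sigma_T(G,T):=\max_{uv\in E(G)} d_T(u,v)$, and the tree-stretch is $\sigma_T(G):=\min\{\sigma_T(G,T): T \text{ a spanning tree of } G\}$. *)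

theory Defs
  imports Main
begin

definition walk :: "'a set \<Rightarrow> 'a set set \<Rightarrow> 'a list \<Rightarrow> bool" where
  "walk V E xs = (xs \<noteq> [] \<and> set xs \<subseteq> V \<and> (\<forall>i. Suc i < length xs \<longrightarrow> {xs!i, xs!Suc i} \<in> E))"

definition connected_graph :: "'a set \<Rightarrow> 'a set set \<Rightarrow> bool" where
  "connected_graph V E = (\<forall>u\<in>V. \<forall>v\<in>V. \<exists>xs. walk V E xs \<and> hd xs = u \<and> last xs = v)"

definition is_cycle :: "'a set \<Rightarrow> 'a set set \<Rightarrow> 'a list \<Rightarrow> bool" where
  "is_cycle V E xs = (3 \<le> length xs \<and> distinct xs \<and> walk V E xs \<and> {last xs, hd xs} \<in> E)"

definition is_graph :: "'a set \<Rightarrow> 'a set set \<Rightarrow> bool" where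
  "is_graph V E = (\<forall>e\<in>E. \<exists>u v. e = {u, v} \<and> u \<noteq> v \<and> u \<in> V \<and> v \<in> V)"

definition is_tree :: "'a set \<Rightarrow> 'a set set \<Rightarrow> bool" where
  "is_tree V E = (is_graph V E \<and> connected_graph V E \<and> \<not> (\<exists>xs. is_cycle V E xs))"

definition spanning_tree :: "'a set \<Rightarrow> 'a set set \<Rightarrow> 'a set set \<Rightarrow> bool" where
  "spanning_tree V E T = (T \<subseteq> E \<and> is_tree V T)"

definition graph_dist :: "'a set \<Rightarrow> 'a set set \<Rightarrow> 'a \<Rightarrow> 'a \<Rightarrow> nat" where
  "graph_dist V E u v = (LEAST k. \<exists>xs. walk V E xs \<and> hd xs = u \<and> last xs = v \<and> length xs = Suc k)"

definition stretch :: "'a set \<Rightarrow> 'a set set \<Rightarrow> 'a set set \<Rightarrow> nat" where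
  "stretch V E T = Max {graph_dist V T u v | u v. {u, v} \<in> E}"

definition tree_stretch :: "'a set \<Rightarrow> 'a set set \<Rightarrow> nat" where
  "tree_stretch V E = Min {stretch V E T | T. spanning_tree V E T}"

text \<open>Hamming graph K_{n_1} x ... x K_{n_d}, ns = [n_1,...,n_d].\<close>
definition hamming_V :: "nat list \<Rightarrow> nat list set" where
  "hamming_V ns = {xs. length xs = length ns \<and> (\<forall>i<length ns. xs!i < ns!i)}"

definition hamming_E :: "nat list \<Rightarrow> nat list set set" where
  "hamming_E ns = {{x, y} | x y. x \<in> hamming_V ns \<and> y \<in> hamming_V ns \<and>
                     card {i. i < length ns \<and> x!i \<noteq> y!i} = 1}"

end

theory Submission
  imports Defs
begin

text \<open>
  Upper bound: in the spanning tree where the parent of a vertex is obtained by zeroing its last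
  non-zero coordinate, both ends of an edge in direction \<open>i\<close> reach a common ancestor within
  \<open>d - i\<close> steps. This stretches every edge by at most \<open>2 d\<close>, and by at most \<open>2 d - 1\<close> when
  \<open>n\<^sub>1 = 2\<close>, because then one end of an edge in the first direction has first coordinate \<open>0\<close>.

  Lower bound: let \<open>T\<close> be a spanning tree stretching every edge by less than \<open>b\<close>, where
  \<open>b \<le> 2 d - 1\<close>, or \<open>b \<le> 2 d\<close> and all \<open>n\<^sub>i \<ge> 3\<close>. The vertices differing from \<open>v\<close> in every
  coordinate are at tree distance at least \<open>d\<close> from \<open>v\<close> and are connected by Hamming edges among
  themselves, so the tree paths from \<open>v\<close> to all of them leave \<open>v\<close> through one neighbour
  \<open>p v\<close>. A suitable vertex antipodal to \<open>p v\<close> then shows \<open>p (p v) \<noteq> v\<close>, so iterating \<open>p\<close>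
  yields a walk in the finite tree \<open>T\<close> that never steps back: a contradiction.
\<close>

section \<open>Walks and paths\<close>

abbreviation adjacent :: "'a set set \<Rightarrow> 'a \<Rightarrow> 'a \<Rightarrow> bool" where
  "adjacent E a b \<equiv> {a, b} \<in> E"

lemma walk_iff_successively:
  "walk V E xs \<longleftrightarrow> xs \<noteq> [] \<and> set xs \<subseteq> V \<and> successively (adjacent E) xs"
  unfolding walk_def successively_conv_nth by blast

lemma successively_adjacent_rev:
  "successively (adjacent E) (rev xs) \<longleftrightarrow> successively (adjacent E) xs"
  by (simp add: insert_commute)

lemma walk_rev: "walk V E xs \<Longrightarrow> walk V E (rev xs)"
  unfolding walk_iff_successively by (metis successively_adjacent_rev rev_is_Nil_conv set_rev)

lemma walk_append:
  "walk V E xs \<Longrightarrow> walk V E ys \<Longrightarrow> last xs = hd ys \<Longrightarrow> walk V E (xs @ tl ys)"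
  unfolding walk_iff_successively
  by (cases ys; cases "tl ys") (auto simp: successively_append_iff successively_Cons)

lemma walk_appendD: "walk V E (xs @ ys) \<Longrightarrow> xs \<noteq> [] \<Longrightarrow> walk V E xs"
  unfolding walk_iff_successively by (auto simp: successively_append_iff)

definition reach_within :: "'a set \<Rightarrow> 'a set set \<Rightarrow> nat \<Rightarrow> 'a \<Rightarrow> 'a \<Rightarrow> bool" where
  "reach_within V E k u v \<longleftrightarrow> (\<exists>xs. walk V E xs \<and> hd xs = u \<and> last xs = v \<and> length xs \<le> Suc k)"

lemma reach_within_refl: "u \<in> V \<Longrightarrow> reach_within V E 0 u u"
  unfolding reach_within_def by (rule exI[of _ "[u]"]) (simp add: walk_iff_successively)

lemma reach_within_edge:
  "{u, v} \<in> E \<Longrightarrow> u \<in> V \<Longrightarrow> v \<in> V \<Longrightarrow> reach_within V E 1 u v"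
  unfolding reach_within_def by (rule exI[of _ "[u, v]"]) (simp add: walk_iff_successively)

lemma reach_within_mono: "reach_within V E k u v \<Longrightarrow> k \<le> k' \<Longrightarrow> reach_within V E k' u v"
  unfolding reach_within_def by fastforce

lemma reach_within_trans:
  assumes "reach_within V E k u v" and "reach_within V E k' v w"
  shows "reach_within V E (k + k') u w"
proof -
  obtain xs ys where xs: "walk V E xs" "hd xs = u" "last xs = v" "length xs \<le> Suc k"
    and ys: "walk V E ys" "hd ys = v" "last ys = w" "length ys \<le> Suc k'"
    using assms unfolding reach_within_def by blast
  have ne: "xs \<noteq> []" "ys \<noteq> []"
    using xs ys by (auto simp: walk_iff_successively)
  have "walk V E (xs @ tl ys)" using walk_append[OF xs(1) ys(1)] xs ys by auto
  moreover have "hd (xs @ tl ys) = u" using xs ne by simp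
  moreover have "last (xs @ tl ys) = w" using xs ys ne by (cases ys; cases "tl ys") auto
  moreover have "length (xs @ tl ys) \<le> Suc (k + k')" using xs ys ne by (cases ys) auto
  ultimately show ?thesis unfolding reach_within_def by blast
qed

lemma reach_within_sym: "reach_within V E k u v \<Longrightarrow> reach_within V E k v u"
  unfolding reach_within_def by (metis hd_rev last_rev length_rev walk_rev)

lemma graph_dist_le_if_reach_within: "reach_within V E k u v \<Longrightarrow> graph_dist V E u v \<le> k"
proof -
  assume "reach_within V E k u v"
  then obtain xs where xs: "walk V E xs" "hd xs = u" "last xs = v" "length xs \<le> Suc k"
    unfolding reach_within_def by blast
  then have "xs \<noteq> []" by (auto simp: walk_iff_successively)
  then have "graph_dist V E u v \<le> length xs - 1"
    unfolding graph_dist_def using xs by (intro Least_le) (rule exI[of _ xs], auto)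
  with xs show ?thesis by simp
qed

definition is_path :: "'a set \<Rightarrow> 'a set set \<Rightarrow> 'a \<Rightarrow> 'a \<Rightarrow> 'a list \<Rightarrow> bool" where
  "is_path V E x y p \<longleftrightarrow> walk V E p \<and> distinct p \<and> hd p = x \<and> last p = y"

lemma is_path_rev: "is_path V E x y p \<Longrightarrow> is_path V E y x (rev p)"
  unfolding is_path_def by (auto simp: hd_rev last_rev walk_rev)

lemma walk_imp_is_path:
  "walk V E xs \<Longrightarrow> \<exists>p. is_path V E (hd xs) (last xs) p \<and> length p \<le> length xs"
proof (induction "length xs" arbitrary: xs rule: less_induct)
  case less
  show ?case
  proof (cases "distinct xs")
    case True
    with less.prems show ?thesis unfolding is_path_def by blast
  next
    case False
    then obtain as bs cs y where xs: "xs = as @ [y] @ bs @ [y] @ cs"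
      using not_distinct_decomp by blast
    let ?ys = "as @ [y] @ cs"
    have "walk V E ?ys" using less.prems unfolding xs walk_iff_successively
      by (auto simp: successively_append_iff successively_Cons split: if_splits)
    moreover have "length ?ys < length xs" "hd ?ys = hd xs" "last ?ys = last xs"
      using xs by (cases as; simp)+
    ultimately show ?thesis using less.hyps[of ?ys] by (metis order.strict_implies_order order_trans)
  qed
qed

lemma is_cycle_of_fork:
  assumes "walk V E (a # xs @ [z])" and "walk V E (a # ys @ [z])"
    and "distinct (a # xs @ z # ys)" and "xs \<noteq> [] \<or> ys \<noteq> []"
  shows "is_cycle V E (a # xs @ z # rev ys)"
proof -
  let ?cs = "a # xs @ z # rev ys"
  have outward: "successively (adjacent E) (a # xs @ [z])"
    using assms(1) by (simp add: walk_iff_successively)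
  have "successively (adjacent E) (ys @ [z])"
    using assms(2) by (simp add: walk_iff_successively successively_Cons)
  then have inward: "successively (adjacent E) (z # rev ys)"
    using successively_adjacent_rev[of E "ys @ [z]"] by simp
  have "successively (adjacent E) ?cs"
    using outward inward successively_append_iff[of "adjacent E" "a # xs" "z # rev ys"]
      successively_append_iff[of "adjacent E" "a # xs" "[z]"] by auto
  moreover have "{last ?cs, hd ?cs} \<in> E"
    using assms(2) by (cases ys) (auto simp: walk_iff_successively insert_commute)
  ultimately show ?thesis
    using assms unfolding is_cycle_def walk_iff_successively by (auto simp: Suc_le_eq)
qed

lemma is_path_unique:
  assumes acyclic: "\<nexists>cs. is_cycle V E cs"
    and "is_path V E x y p" and "is_path V E x y q"
  shows "p = q"
  using assms(2,3)
proof (induction p arbitrary: x q)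
  case Nil
  then show ?case by (simp add: is_path_def walk_iff_successively)
next
  case (Cons a pt)
  obtain qt where q: "q = a # qt"
    using Cons.prems by (cases q) (auto simp: is_path_def walk_iff_successively)
  show ?case
  proof (cases "pt = [] \<or> qt = []")
    case True
    with Cons.prems q show ?thesis
      unfolding is_path_def by (auto split: if_splits)
  next
    case False
    then have ne: "pt \<noteq> []" "qt \<noteq> []" by auto
    show ?thesis
    proof (cases "hd pt = hd qt")
      case True
      have "is_path V E (hd pt) y pt" "is_path V E (hd pt) y qt"
        using Cons.prems q ne True
        by (auto simp: is_path_def walk_iff_successively successively_Cons)
      with Cons.IH q show ?thesis by blast
    next
      case fork: False
      have "last pt \<in> set qt"
        using Cons.prems q ne by (auto simp: is_path_def)
      then obtain xs z pr where pt: "pt = xs @ z # pr" and "z \<in> set qt"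
        and xs: "\<forall>u\<in>set xs. u \<notin> set qt"
      proof -
        have "\<exists>u\<in>set pt. u \<in> set qt" using \<open>last pt \<in> set qt\<close> ne(1) by auto
        then show thesis using that split_list_first_prop[of pt "\<lambda>u. u \<in> set qt"] by blast
      qed
      then obtain ys qr where qt: "qt = ys @ z # qr" by (blast dest: split_list)
      have "walk V E ((a # xs @ [z]) @ pr)" "walk V E ((a # ys @ [z]) @ qr)"
        using Cons.prems q unfolding pt qt is_path_def by auto
      then have "walk V E (a # xs @ [z])" "walk V E (a # ys @ [z])"
        by (blast dest: walk_appendD)+
      moreover have "distinct (a # xs @ z # ys)" "xs \<noteq> [] \<or> ys \<noteq> []"
        using Cons.prems q xs fork unfolding pt qt is_path_def by auto
      ultimately have "is_cycle V E (a # xs @ z # rev ys)" by (rule is_cycle_of_fork)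
      with acyclic show ?thesis by blast
    qed
  qed
qed

lemma is_cycle_edge:
  assumes "is_cycle V E cs" and "i < length cs"
  shows "{cs ! i, cs ! (if Suc i = length cs then 0 else Suc i)} \<in> E"
proof (cases "Suc i = length cs")
  case True
  then have "last cs = cs ! i" "hd cs = cs ! 0"
    by (metis diff_Suc_1 last_conv_nth list.size(3) nat.distinct(1),
        metis hd_conv_nth list.size(3) nat.distinct(1))
  with True assms(1) show ?thesis unfolding is_cycle_def by simp
next
  case False
  with assms show ?thesis unfolding is_cycle_def walk_def by auto
qed

text \<open>A vertex of maximal rank on a cycle would have its two cycle neighbours as parents.\<close>

lemma no_cycle_if_unique_parent:
  fixes rank :: "'a \<Rightarrow> nat" and parent :: "'a \<Rightarrow> 'a \<Rightarrow> bool"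
  assumes edge_parent: "\<And>a b. {a, b} \<in> E \<Longrightarrow> parent a b \<or> parent b a"
    and rank_parent: "\<And>u a. u \<in> V \<Longrightarrow> parent u a \<Longrightarrow> rank a < rank u"
    and parent_unique: "\<And>u a b. parent u a \<Longrightarrow> parent u b \<Longrightarrow> a = b"
  shows "\<not> is_cycle V E cs"
proof
  assume cycle: "is_cycle V E cs"
  define n where "n = length cs"
  have n: "3 \<le> n" "distinct cs" "set cs \<subseteq> V"
    using cycle unfolding is_cycle_def walk_def n_def by auto
  define next_of where "next_of i = (if Suc i = n then 0 else Suc i)" for i
  let ?M = "Max (rank ` set cs)"
  have "?M \<in> rank ` set cs" using n(1) n_def by (intro Max_in) auto
  then obtain m where m: "m < n" "rank (cs ! m) = ?M"
    by (auto simp: in_set_conv_nth n_def)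
  have rank_max: "rank (cs ! i) \<le> rank (cs ! m)" if "i < n" for i
    unfolding m(2) using that n_def by (intro Max_ge) auto
  have parent_of_m: "parent (cs ! m) (cs ! i)" if "i < n" "{cs ! m, cs ! i} \<in> E" for i
  proof (rule ccontr)
    assume "\<not> parent (cs ! m) (cs ! i)"
    then have "parent (cs ! i) (cs ! m)" using edge_parent that(2) by blast
    moreover have "cs ! i \<in> V" using n(3) that(1) n_def nth_mem by blast
    ultimately have "rank (cs ! m) < rank (cs ! i)" by (rule rank_parent[rotated])
    with rank_max that(1) show False by (simp add: leD)
  qed
  define p where "p = (if m = 0 then n - 1 else m - 1)"
  have "p < n" "next_of p = m" using m(1) n(1) unfolding p_def next_of_def by auto
  then have "{cs ! m, cs ! p} \<in> E"
    using is_cycle_edge[OF cycle, of p] unfolding next_of_def n_def by (simp add: insert_commute)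
  moreover have "{cs ! m, cs ! next_of m} \<in> E" "next_of m < n"
    using is_cycle_edge[OF cycle, of m] m(1) n(1) unfolding next_of_def n_def by auto
  ultimately have "cs ! p = cs ! next_of m"
    using parent_of_m parent_unique \<open>p < n\<close> by blast
  then have "p = next_of m"
    using n(2) \<open>p < n\<close> \<open>next_of m < n\<close> by (simp add: nth_eq_iff_index_eq n_def)
  then show False using m(1) n(1) unfolding p_def next_of_def by (auto split: if_splits)
qed

section \<open>Trees\<close>

locale tree_graph =
  fixes V :: "'a set" and T :: "'a set set"
  assumes is_tree: "is_tree V T"
begin

abbreviation tree_dist :: "'a \<Rightarrow> 'a \<Rightarrow> nat" where
  "tree_dist \<equiv> graph_dist V T"

lemma acyclic: "\<nexists>cs. is_cycle V T cs"
  using is_tree unfolding is_tree_def by blast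

lemma edge_neq: "{a, b} \<in> T \<Longrightarrow> a \<noteq> b"
  using is_tree unfolding is_tree_def is_graph_def by (metis doubleton_eq_iff insert_absorb2)

lemma is_path_exists: "x \<in> V \<Longrightarrow> y \<in> V \<Longrightarrow> \<exists>p. is_path V T x y p"
  using is_tree walk_imp_is_path unfolding is_tree_def connected_graph_def by metis

lemma length_is_path:
  assumes p: "is_path V T x y p"
  shows "length p = Suc (tree_dist x y)"
proof -
  have w: "walk V T p" "hd p = x" "last p = y" "p \<noteq> []"
    using p by (auto simp: is_path_def walk_iff_successively)
  then have ex: "\<exists>xs. walk V T xs \<and> hd xs = x \<and> last xs = y \<and> length xs = Suc (length p - 1)"
    by (intro exI[of _ p]) auto
  then have le: "tree_dist x y \<le> length p - 1"
    unfolding graph_dist_def by (rule Least_le)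
  from ex have "\<exists>k xs. walk V T xs \<and> hd xs = x \<and> last xs = y \<and> length xs = Suc k"
    by blast
  from LeastI_ex[OF this] obtain q
    where q: "walk V T q" "hd q = x" "last q = y" "length q = Suc (tree_dist x y)"
    unfolding graph_dist_def by blast
  then obtain r where "is_path V T x y r" "length r \<le> length q"
    using walk_imp_is_path by metis
  then have "length p \<le> Suc (tree_dist x y)"
    using is_path_unique[OF acyclic p] q by auto
  with le w(4) show ?thesis by (cases p) auto
qed

lemma tree_dist_sym:
  assumes "x \<in> V" "y \<in> V"
  shows "tree_dist x y = tree_dist y x"
proof -
  obtain p where "is_path V T x y p" using is_path_exists assms by blast
  then show ?thesis
    using length_is_path[of x y p] length_is_path[of y x "rev p"] is_path_rev by fastforce
qed

definition tree_path :: "'a \<Rightarrow> 'a \<Rightarrow> 'a list" where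
  "tree_path x y = (THE p. is_path V T x y p)"

lemma tree_path_eqI: "is_path V T x y p \<Longrightarrow> tree_path x y = p"
  unfolding tree_path_def using is_path_unique[OF acyclic] by blast

lemma is_path_tree_path: "x \<in> V \<Longrightarrow> y \<in> V \<Longrightarrow> is_path V T x y (tree_path x y)"
  using is_path_exists tree_path_eqI by metis

definition branch :: "'a \<Rightarrow> 'a \<Rightarrow> 'a" where
  "branch v x = tree_path v x ! 1"

lemma tree_path_eq_Cons_branch:
  assumes "v \<in> V" "x \<in> V" "x \<noteq> v"
  shows "\<exists>r. tree_path v x = v # branch v x # r"
proof -
  have p: "is_path V T v x (tree_path v x)" using is_path_tree_path assms by blast
  then obtain r where "tree_path v x = v # r"
    by (cases "tree_path v x") (auto simp: is_path_def walk_iff_successively)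
  moreover have "r \<noteq> []" using p assms calculation by (auto simp: is_path_def)
  ultimately show ?thesis unfolding branch_def by (cases r) auto
qed

lemma branch_edge:
  assumes "v \<in> V" "x \<in> V" "x \<noteq> v"
  shows "{v, branch v x} \<in> T" and "branch v x \<in> V"
proof -
  obtain r where "tree_path v x = v # branch v x # r"
    using tree_path_eq_Cons_branch assms by blast
  with is_path_tree_path[OF assms(1,2)]
  show "{v, branch v x} \<in> T" "branch v x \<in> V"
    unfolding is_path_def walk_iff_successively by auto
qed

lemma branch_branch_neq:
  assumes "v \<in> V" "x \<in> V" "x \<noteq> v" "x \<noteq> branch v x"
  shows "branch (branch v x) x \<noteq> v"
proof -
  obtain r where path: "tree_path v x = v # branch v x # r"
    using tree_path_eq_Cons_branch assms by blast
  have p: "is_path V T v x (v # branch v x # r)"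
    using is_path_tree_path[OF assms(1,2)] path by simp
  then have "is_path V T (branch v x) x (branch v x # r)"
    unfolding is_path_def walk_iff_successively by (auto simp: successively_Cons)
  then have "tree_path (branch v x) x = branch v x # r" by (rule tree_path_eqI)
  moreover have "r \<noteq> []" "v \<notin> set r" using p assms(4) by (auto simp: is_path_def)
  ultimately show ?thesis unfolding branch_def by (cases r) auto
qed

text \<open>A common vertex \<open>z \<noteq> v\<close> would make the initial segments up to \<open>z\<close> two paths from \<open>v\<close>
  to \<open>z\<close>, hence equal, so the two tree paths would leave \<open>v\<close> through the same neighbour.\<close>

lemma tree_paths_branch_apart:
  assumes "v \<in> V" "x \<in> V" "y \<in> V" "x \<noteq> v" "y \<noteq> v" "branch v x \<noteq> branch v y"
  shows "set (tree_path v x) \<inter> set (tree_path v y) \<subseteq> {v}"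
proof
  let ?P = "tree_path v x" and ?Q = "tree_path v y"
  have P: "is_path V T v x ?P" and Q: "is_path V T v y ?Q"
    using is_path_tree_path assms by auto
  obtain rp where eP: "?P = v # branch v x # rp" using tree_path_eq_Cons_branch assms by blast
  obtain rq where eQ: "?Q = v # branch v y # rq" using tree_path_eq_Cons_branch assms by blast
  fix z assume z: "z \<in> set ?P \<inter> set ?Q"
  show "z \<in> {v}"
  proof (rule ccontr)
    assume "z \<notin> {v}"
    obtain p1 p2 q1 q2 where sp: "?P = p1 @ z # p2" and sq: "?Q = q1 @ z # q2"
      using z by (blast dest: split_list)
    have "p1 \<noteq> []" "q1 \<noteq> []" using sp sq eP eQ \<open>z \<notin> {v}\<close> by (cases p1; cases q1; auto)+
    have "walk V T ((p1 @ [z]) @ p2)" "walk V T ((q1 @ [z]) @ q2)"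
      using P Q sp sq by (simp_all add: is_path_def)
    then have "is_path V T v z (p1 @ [z])" "is_path V T v z (q1 @ [z])"
      using P Q sp sq \<open>p1 \<noteq> []\<close> \<open>q1 \<noteq> []\<close> walk_appendD
      by (auto simp: is_path_def simp del: append_assoc)
    then have "p1 = q1" using is_path_unique[OF acyclic] by blast
    then have "?P ! 1 = ?Q ! 1"
      using sp sq \<open>p1 \<noteq> []\<close> by (cases p1) (auto simp: nth_append)
    with eP eQ assms(6) show False by simp
  qed
qed

lemma tree_dist_through_branch_point:
  assumes "v \<in> V" "x \<in> V" "y \<in> V" "x \<noteq> v" "y \<noteq> v" "branch v x \<noteq> branch v y"
  shows "tree_dist x y = tree_dist x v + tree_dist v y"
proof -
  let ?P = "tree_path v x" and ?Q = "tree_path v y"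
  have P: "is_path V T v x ?P" and Q: "is_path V T v y ?Q"
    using is_path_tree_path assms by auto
  obtain rq where eQ: "?Q = v # branch v y # rq" using tree_path_eq_Cons_branch assms by blast
  let ?C = "rev ?P @ tl ?Q"
  have "walk V T (rev ?P)" "walk V T ?Q" "last (rev ?P) = hd ?Q"
    using P Q walk_rev by (auto simp: is_path_def last_rev)
  then have "walk V T ?C" by (rule walk_append)
  moreover have "set ?P \<inter> set (tl ?Q) = {}"
    using Q eQ tree_paths_branch_apart[OF assms] by (auto simp: is_path_def)
  then have "distinct ?C"
    using P Q by (simp add: is_path_def distinct_tl)
  moreover have "?P \<noteq> []" "tl ?Q \<noteq> []"
    using P eQ by (auto simp: is_path_def walk_iff_successively)
  then have "hd ?C = x" "last ?C = y"
    using P Q by (simp_all add: is_path_def hd_rev last_tl)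
  ultimately have "is_path V T x y ?C" by (simp add: is_path_def)
  then have "length ?C = Suc (tree_dist x y)" by (rule length_is_path)
  moreover have "length ?C = length ?P + length ?Q - 1" using eQ by simp
  moreover have "length ?P = Suc (tree_dist v x)" "length ?Q = Suc (tree_dist v y)"
    using P Q length_is_path by auto
  moreover have "tree_dist v x = tree_dist x v" using tree_dist_sym assms by blast
  ultimately show ?thesis by linarith
qed

text \<open>Some vertex repeats, and between its closest repetition the walk traces a cycle.\<close>

lemma no_nonbacktracking_walk:
  assumes "finite V"
    and f: "\<And>k. f k \<in> V \<and> {f k, f (Suc k)} \<in> T \<and> f (Suc (Suc k)) \<noteq> f k"
  shows False
proof -
  have "\<not> inj f"
  proof
    assume "inj f"
    then have "infinite (range f)" using finite_imageD by blast
    moreover have "range f \<subseteq> V" using f by auto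
    ultimately show False using \<open>finite V\<close> finite_subset by blast
  qed
  then have ex: "\<exists>g i. 0 < g \<and> f i = f (i + g)"
    unfolding inj_def by (metis less_imp_add_positive nat_neq_iff)
  define g where "g = (LEAST g. \<exists>i. 0 < g \<and> f i = f (i + g))"
  obtain i where gi: "0 < g" "f i = f (i + g)"
    using LeastI_ex[OF ex] unfolding g_def by blast
  have g_min: "g \<le> g'" if "0 < g'" "f i' = f (i' + g')" for g' i'
    unfolding g_def by (rule Least_le) (use that in blast)
  have "g \<noteq> 1" using gi edge_neq f by (metis Suc_eq_plus1 add.commute plus_1_eq_Suc)
  moreover have "g \<noteq> 2" using gi f by (metis add_2_eq_Suc')
  ultimately have len: "3 \<le> g" using gi by linarith
  define cs where "cs = map f [i..<i+g]"
  have "inj_on f {i..<i+g}"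
  proof (rule inj_onI)
    fix a b assume ab: "a \<in> {i..<i+g}" "b \<in> {i..<i+g}" "f a = f b"
    show "a = b"
    proof (rule ccontr)
      assume "a \<noteq> b"
      then have "g \<le> b - a \<or> g \<le> a - b"
        using g_min[of "b - a" a] g_min[of "a - b" b] ab(3) by (cases "a < b") auto
      with ab(1,2) \<open>a \<noteq> b\<close> show False by auto
    qed
  qed
  then have "distinct cs" unfolding cs_def by (simp add: distinct_map)
  moreover have "successively (adjacent T) cs" "set cs \<subseteq> V"
    unfolding cs_def using f by (auto simp: successively_conv_nth)
  moreover have "{last cs, hd cs} \<in> T"
    using f[of "i + g - 1"] gi len unfolding cs_def by (simp add: last_map hd_map insert_commute)
  ultimately have "is_cycle V T cs"
    using len unfolding is_cycle_def walk_iff_successively cs_def by auto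
  with acyclic show False by blast
qed

end

section \<open>Stretch\<close>

lemma finite_stretch_values:
  assumes "finite V" and "\<forall>e\<in>E. e \<subseteq> V"
  shows "finite {graph_dist V T u v | u v. {u, v} \<in> E}"
proof -
  have "{graph_dist V T u v | u v. {u, v} \<in> E} \<subseteq> (\<lambda>(u, v). graph_dist V T u v) ` (V \<times> V)"
  proof
    fix z assume "z \<in> {graph_dist V T u v | u v. {u, v} \<in> E}"
    then obtain u v where "z = graph_dist V T u v" "{u, v} \<in> E" by blast
    moreover have "u \<in> V" "v \<in> V" using assms(2) \<open>{u, v} \<in> E\<close> by auto
    ultimately show "z \<in> (\<lambda>(u, v). graph_dist V T u v) ` (V \<times> V)"
      by (auto intro: image_eqI[of _ _ "(u, v)"])
  qed
  moreover have "finite ((\<lambda>(u, v). graph_dist V T u v) ` (V \<times> V))"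
    using assms(1) by simp
  ultimately show ?thesis by (rule finite_subset)
qed

lemma graph_dist_le_stretch:
  assumes "finite V" and "\<forall>e\<in>E. e \<subseteq> V" and "{u, v} \<in> E"
  shows "graph_dist V T u v \<le> stretch V E T"
  unfolding stretch_def
  by (intro Max_ge finite_stretch_values[OF assms(1,2)]) (use assms(3) in blast)

lemma stretch_le:
  assumes "finite V" and "\<forall>e\<in>E. e \<subseteq> V" and "{u\<^sub>0, v\<^sub>0} \<in> E"
    and "\<And>u v. {u, v} \<in> E \<Longrightarrow> graph_dist V T u v \<le> b"
  shows "stretch V E T \<le> b"
  unfolding stretch_def
proof (rule Max.boundedI)
  show "finite {graph_dist V T u v | u v. {u, v} \<in> E}"
    using assms(1,2) by (rule finite_stretch_values)
  show "{graph_dist V T u v | u v. {u, v} \<in> E} \<noteq> {}"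
    using assms(3) by blast
qed (use assms(4) in blast)

lemma tree_stretch_eqI:
  assumes "finite E"
    and "\<And>T. spanning_tree V E T \<Longrightarrow> b \<le> stretch V E T"
    and "spanning_tree V E T\<^sub>0" and "stretch V E T\<^sub>0 \<le> b"
  shows "tree_stretch V E = b"
  unfolding tree_stretch_def
proof (rule Min_eqI)
  have "{T. spanning_tree V E T} \<subseteq> Pow E" unfolding spanning_tree_def by blast
  then have "finite {T. spanning_tree V E T}"
    using assms(1) by (simp add: finite_subset)
  then show "finite {stretch V E T | T. spanning_tree V E T}"
    by (simp add: setcompr_eq_image)
  show "b \<in> {stretch V E T | T. spanning_tree V E T}"
    using assms(2-4) by (metis (mono_tags, lifting) le_antisym mem_Collect_eq)
qed (use assms(2) in blast)

section \<open>Hamming graphs\<close>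

definition hamming_dist :: "nat list \<Rightarrow> nat list \<Rightarrow> nat list \<Rightarrow> nat" where
  "hamming_dist ns x y = card {i. i < length ns \<and> x ! i \<noteq> y ! i}"

lemma hamming_dist_commute: "hamming_dist ns x y = hamming_dist ns y x"
  unfolding hamming_dist_def by (simp add: eq_commute)

lemma hamming_dist_triangle: "hamming_dist ns x z \<le> hamming_dist ns x y + hamming_dist ns y z"
proof -
  let ?D = "\<lambda>x y. {i. i < length ns \<and> x ! i \<noteq> y ! i}"
  have "card (?D x z) \<le> card (?D x y \<union> ?D y z)" by (intro card_mono) auto
  also have "\<dots> \<le> card (?D x y) + card (?D y z)" by (rule card_Un_le)
  finally show ?thesis unfolding hamming_dist_def .
qed

lemma hamming_dist_eq_length:
  "(\<And>i. i < length ns \<Longrightarrow> x ! i \<noteq> y ! i) \<Longrightarrow> hamming_dist ns x y = length ns"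
proof -
  assume "\<And>i. i < length ns \<Longrightarrow> x ! i \<noteq> y ! i"
  then have "{i. i < length ns \<and> x ! i \<noteq> y ! i} = {..<length ns}" by auto
  then show ?thesis unfolding hamming_dist_def by simp
qed

lemma hamming_dist_eq_0_imp_eq:
  "x \<in> hamming_V ns \<Longrightarrow> y \<in> hamming_V ns \<Longrightarrow> hamming_dist ns x y = 0 \<Longrightarrow> x = y"
  unfolding hamming_dist_def hamming_V_def by (auto intro: nth_equalityI)

lemma hamming_dist_list_update:
  "length x = length ns \<Longrightarrow> j < length ns \<Longrightarrow> x ! j \<noteq> c \<Longrightarrow> hamming_dist ns x (x[j := c]) = 1"
proof -
  assume "length x = length ns" "j < length ns" "x ! j \<noteq> c"
  then have "{i. i < length ns \<and> x ! i \<noteq> x[j := c] ! i} = {j}"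
    by (auto simp: nth_list_update)
  then show ?thesis unfolding hamming_dist_def by simp
qed

lemma hamming_dist_list_update_less:
  assumes "length x = length ns" "j < length ns" "x ! j \<noteq> y ! j"
  shows "hamming_dist ns (x[j := y ! j]) y < hamming_dist ns x y"
proof -
  let ?D = "{i. i < length ns \<and> x ! i \<noteq> y ! i}"
  have "{i. i < length ns \<and> x[j := y ! j] ! i \<noteq> y ! i} = ?D - {j}"
    using assms by (auto simp: nth_list_update)
  moreover have "card (?D - {j}) < card ?D"
    using assms by (intro card_Diff1_less) auto
  ultimately show ?thesis unfolding hamming_dist_def by simp
qed

lemma list_update_in_hamming_V:
  "x \<in> hamming_V ns \<Longrightarrow> j < length ns \<Longrightarrow> c < ns ! j \<Longrightarrow> x[j := c] \<in> hamming_V ns"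
  unfolding hamming_V_def by (auto simp: nth_list_update)

lemma hamming_E_iff:
  "{u, v} \<in> hamming_E ns \<longleftrightarrow> u \<in> hamming_V ns \<and> v \<in> hamming_V ns \<and> hamming_dist ns u v = 1"
proof
  assume "{u, v} \<in> hamming_E ns"
  then obtain x y where "{u, v} = {x, y}" "x \<in> hamming_V ns" "y \<in> hamming_V ns"
    "hamming_dist ns x y = 1"
    unfolding hamming_E_def hamming_dist_def by blast
  then show "u \<in> hamming_V ns \<and> v \<in> hamming_V ns \<and> hamming_dist ns u v = 1"
    unfolding doubleton_eq_iff using hamming_dist_commute by metis
qed (auto simp: hamming_E_def hamming_dist_def)

lemma hamming_E_single_coordinate:
  assumes "{x, y} \<in> hamming_E ns"
  obtains i where "i < length ns" "x ! i \<noteq> y ! i" "\<And>j. j < length ns \<Longrightarrow> j \<noteq> i \<Longrightarrow> x ! j = y ! j"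
proof -
  have "card {j. j < length ns \<and> x ! j \<noteq> y ! j} = 1"
    using assms unfolding hamming_E_iff hamming_dist_def by blast
  then obtain i where "{j. j < length ns \<and> x ! j \<noteq> y ! j} = {i}"
    by (rule card_1_singletonE)
  then show thesis using that by blast
qed

lemma finite_hamming_V: "finite (hamming_V ns)"
proof (rule finite_subset)
  show "hamming_V ns \<subseteq> {xs. set xs \<subseteq> {..<sum_list ns} \<and> length xs = length ns}"
    unfolding hamming_V_def
    by (auto simp: in_set_conv_nth) (metis elem_le_sum_list less_le_trans)
qed (rule finite_lists_length_eq, simp)

lemma hamming_E_subset_Pow: "\<forall>e\<in>hamming_E ns. e \<subseteq> hamming_V ns"
  unfolding hamming_E_def by blast

lemma finite_hamming_E: "finite (hamming_E ns)"
  using hamming_E_subset_Pow finite_hamming_V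
  by (metis Pow_iff finite_Pow_iff rev_finite_subset subsetI)

lemma hamming_dist_le_walk_length:
  assumes "T \<subseteq> hamming_E ns" and "walk V T xs"
  shows "hamming_dist ns (hd xs) (last xs) \<le> length xs - 1"
  using assms(2)
proof (induction xs rule: induct_list012)
  case (3 a b xs)
  then have "{a, b} \<in> hamming_E ns" "walk V T (b # xs)"
    using assms(1) by (auto simp: walk_iff_successively)
  with 3 show ?case
    using hamming_dist_triangle[of ns a "last (b # xs)" b] by (auto simp: hamming_E_iff)
qed (auto simp: hamming_dist_def walk_iff_successively)

locale hamming_graph =
  fixes ns :: "nat list"
  assumes length_pos: "0 < length ns"
    and factor_ge_2: "\<And>i. i < length ns \<Longrightarrow> 2 \<le> ns ! i"
begin

abbreviation "V \<equiv> hamming_V ns"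
abbreviation "E \<equiv> hamming_E ns"
abbreviation "d \<equiv> length ns"

lemma length_vertex: "x \<in> V \<Longrightarrow> length x = d"
  unfolding hamming_V_def by simp

lemma zeros_in_V: "replicate d 0 \<in> V"
  unfolding hamming_V_def using factor_ge_2 by fastforce

lemma zeros_edge: "{replicate d 0, (replicate d 0)[0 := 1]} \<in> E"
  using zeros_in_V length_pos factor_ge_2[of 0]
  by (auto simp: hamming_E_iff hamming_dist_list_update list_update_in_hamming_V)

subsection \<open>A spanning tree of small stretch\<close>

definition clear_from :: "nat \<Rightarrow> nat list \<Rightarrow> nat list" where
  "clear_from k x = map (\<lambda>j. if j < k then x ! j else 0) [0..<length x]"

lemma length_clear_from [simp]: "length (clear_from k x) = length x"
  unfolding clear_from_def by simp

lemma nth_clear_from [simp]: "j < length x \<Longrightarrow> clear_from k x ! j = (if j < k then x ! j else 0)"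
  unfolding clear_from_def by simp

lemma clear_from_beyond: "length x \<le> k \<Longrightarrow> clear_from k x = x"
  by (rule nth_equalityI) auto

lemma clear_from_Suc: "x ! k = 0 \<Longrightarrow> clear_from (Suc k) x = clear_from k x"
  by (rule nth_equalityI) (auto simp: less_Suc_eq)

lemma clear_from_cong:
  "length x = length y \<Longrightarrow> (\<And>j. j < k \<Longrightarrow> x ! j = y ! j) \<Longrightarrow> clear_from k x = clear_from k y"
  by (rule nth_equalityI) auto

lemma clear_from_in_V: "x \<in> V \<Longrightarrow> clear_from k x \<in> V"
  unfolding hamming_V_def using factor_ge_2 by auto

lemma clear_from_Suc_eq_update:
  "k < length x \<Longrightarrow> clear_from (Suc k) x = (clear_from k x)[k := x ! k]"
  by (rule nth_equalityI) (simp_all add: nth_list_update less_Suc_eq)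

lemma clear_from_edge:
  assumes "x \<in> V" "k < d" "x ! k \<noteq> 0"
  shows "{clear_from k x, clear_from (Suc k) x} \<in> E"
    and "clear_from k x \<noteq> clear_from (Suc k) x"
proof -
  have "length x = d" using assms(1) by (rule length_vertex)
  then have "clear_from (Suc k) x = (clear_from k x)[k := x ! k]" "clear_from k x ! k = 0"
    using assms(2) by (simp_all add: clear_from_Suc_eq_update)
  then have "hamming_dist ns (clear_from k x) (clear_from (Suc k) x) = 1"
    using assms \<open>length x = d\<close> by (simp add: hamming_dist_list_update)
  then show "{clear_from k x, clear_from (Suc k) x} \<in> E"
    using assms(1) clear_from_in_V by (simp add: hamming_E_iff)
  then show "clear_from k x \<noteq> clear_from (Suc k) x"
    using \<open>hamming_dist ns (clear_from k x) (clear_from (Suc k) x) = 1\<close>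
    by (auto simp: hamming_dist_def)
qed

text \<open>The parent of a non-zero vertex is obtained by zeroing its last non-zero coordinate.\<close>

definition prefix_tree :: "nat list set set" where
  "prefix_tree = {{clear_from k x, clear_from (Suc k) x} | x k. x \<in> V \<and> k < d \<and> x ! k \<noteq> 0}"

lemma prefix_tree_subset: "prefix_tree \<subseteq> E"
  unfolding prefix_tree_def using clear_from_edge by blast

lemma is_graph_prefix_tree: "is_graph V prefix_tree"
  unfolding is_graph_def prefix_tree_def using clear_from_edge(2) clear_from_in_V by blast

lemma reach_within_clear_from_clear_from:
  assumes "x \<in> V" "k' \<le> k" "k \<le> d"
  shows "reach_within V prefix_tree (k - k') (clear_from k x) (clear_from k' x)"
  using assms(2,3)
proof (induction k)
  case 0
  then show ?case using reach_within_refl[OF clear_from_in_V[OF assms(1)]] by simp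
next
  case (Suc k)
  show ?case
  proof (cases "k' = Suc k")
    case True
    then show ?thesis using reach_within_refl[OF clear_from_in_V[OF assms(1)]] by simp
  next
    case False
    then have IH: "reach_within V prefix_tree (k - k') (clear_from k x) (clear_from k' x)"
      using Suc by simp
    have "reach_within V prefix_tree 1 (clear_from (Suc k) x) (clear_from k x)"
    proof (cases "x ! k = 0")
      case True
      have "reach_within V prefix_tree 0 (clear_from k x) (clear_from k x)"
        by (rule reach_within_refl[OF clear_from_in_V[OF assms(1)]])
      then have "reach_within V prefix_tree 1 (clear_from k x) (clear_from k x)"
        by (rule reach_within_mono) simp
      moreover have "clear_from (Suc k) x = clear_from k x" using True by (rule clear_from_Suc)
      ultimately show ?thesis by (simp only:)
    next
      case False
      then have "{clear_from k x, clear_from (Suc k) x} \<in> prefix_tree"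
        unfolding prefix_tree_def using assms(1) Suc.prems by (intro CollectI exI[of _ x] exI[of _ k]) simp
      then have "{clear_from (Suc k) x, clear_from k x} \<in> prefix_tree"
        by (simp add: insert_commute)
      then show ?thesis by (rule reach_within_edge) (rule clear_from_in_V[OF assms(1)])+
    qed
    from reach_within_trans[OF this IH] show ?thesis
      using False Suc.prems by (simp add: Suc_diff_le)
  qed
qed

lemma reach_within_clear_from:
  "x \<in> V \<Longrightarrow> k \<le> d \<Longrightarrow> reach_within V prefix_tree (d - k) x (clear_from k x)"
  using reach_within_clear_from_clear_from[of x k d] clear_from_beyond length_vertex by simp

lemma connected_prefix_tree: "connected_graph V prefix_tree"
  unfolding connected_graph_def
proof (intro ballI)
  fix u v assume "u \<in> V" "v \<in> V"
  then have "clear_from 0 u = clear_from 0 v"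
    using length_vertex by (intro clear_from_cong) auto
  moreover have "reach_within V prefix_tree (d - 0) u (clear_from 0 u)"
    using \<open>u \<in> V\<close> by (rule reach_within_clear_from) simp
  moreover have "reach_within V prefix_tree (d - 0) (clear_from 0 v) v"
    using \<open>v \<in> V\<close> by (rule reach_within_sym[OF reach_within_clear_from]) simp
  ultimately have "reach_within V prefix_tree ((d - 0) + (d - 0)) u v"
    by (simp only: reach_within_trans)
  then show "\<exists>xs. walk V prefix_tree xs \<and> hd xs = u \<and> last xs = v"
    unfolding reach_within_def by blast
qed

definition nonzero_count :: "nat list \<Rightarrow> nat" where
  "nonzero_count u = card {j. j < d \<and> u ! j \<noteq> 0}"

definition prefix_parent :: "nat list \<Rightarrow> nat list \<Rightarrow> bool" where
  "prefix_parent u a \<longleftrightarrow> (\<exists>k<d. u ! k \<noteq> 0 \<and> (\<forall>j. k < j \<and> j < d \<longrightarrow> u ! j = 0) \<and> a = u[k := 0])"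

lemma prefix_tree_edge_parent:
  assumes "{a, b} \<in> prefix_tree"
  shows "prefix_parent a b \<or> prefix_parent b a"
proof -
  obtain x k where e: "{a, b} = {clear_from k x, clear_from (Suc k) x}" "x \<in> V" "k < d" "x ! k \<noteq> 0"
    using assms unfolding prefix_tree_def by blast
  have "clear_from k x = (clear_from (Suc k) x)[k := 0]"
    by (rule nth_equalityI) (auto simp: nth_list_update)
  then have "prefix_parent (clear_from (Suc k) x) (clear_from k x)"
    unfolding prefix_parent_def using e length_vertex by (intro exI[of _ k]) auto
  with e(1) show ?thesis by (auto simp: doubleton_eq_iff)
qed

lemma nonzero_count_parent_less:
  assumes "prefix_parent u a" "length u = d"
  shows "nonzero_count a < nonzero_count u"
proof -
  obtain k where k: "k < d" "u ! k \<noteq> 0" "a = u[k := 0]"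
    using assms(1) unfolding prefix_parent_def by blast
  then have "{j. j < d \<and> a ! j \<noteq> 0} = {j. j < d \<and> u ! j \<noteq> 0} - {k}"
    using assms(2) by (auto simp: nth_list_update)
  moreover have "card ({j. j < d \<and> u ! j \<noteq> 0} - {k}) < card {j. j < d \<and> u ! j \<noteq> 0}"
    using k by (intro card_Diff1_less) auto
  ultimately show ?thesis unfolding nonzero_count_def by simp
qed

lemma prefix_parent_unique:
  assumes "prefix_parent u a" and "prefix_parent u b"
  shows "a = b"
proof -
  obtain k where k: "k < d" "u ! k \<noteq> 0" "\<forall>j. k < j \<and> j < d \<longrightarrow> u ! j = 0" "a = u[k := 0]"
    using assms(1) unfolding prefix_parent_def by blast
  obtain k' where k': "k' < d" "u ! k' \<noteq> 0" "\<forall>j. k' < j \<and> j < d \<longrightarrow> u ! j = 0" "b = u[k' := 0]"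
    using assms(2) unfolding prefix_parent_def by blast
  have "k = k'"
    using k k' by (cases k k' rule: linorder_cases) auto
  with k k' show ?thesis by simp
qed

lemma tree_prefix_tree: "is_tree V prefix_tree"
proof -
  have "\<not> is_cycle V prefix_tree cs" for cs
  proof (rule no_cycle_if_unique_parent[where rank = nonzero_count and parent = prefix_parent])
    show "prefix_parent a b \<or> prefix_parent b a" if "{a, b} \<in> prefix_tree" for a b
      using that by (rule prefix_tree_edge_parent)
    show "nonzero_count a < nonzero_count u" if "u \<in> V" "prefix_parent u a" for u a
      using that length_vertex nonzero_count_parent_less by blast
  qed (rule prefix_parent_unique)
  then show ?thesis
    unfolding is_tree_def using is_graph_prefix_tree connected_prefix_tree by simp
qed

lemma spanning_tree_prefix_tree: "spanning_tree V E prefix_tree"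
  unfolding spanning_tree_def using prefix_tree_subset tree_prefix_tree by blast

lemma reach_within_common_prefix:
  assumes "x \<in> V" "y \<in> V" "k \<le> d" "clear_from k x = clear_from k y"
  shows "reach_within V prefix_tree ((d - k) + (d - k)) x y"
proof -
  have "reach_within V prefix_tree (d - k) x (clear_from k x)"
    using assms(1,3) by (rule reach_within_clear_from)
  moreover have "reach_within V prefix_tree (d - k) (clear_from k x) y"
    using assms(4) reach_within_sym[OF reach_within_clear_from[OF assms(2,3)]] by simp
  ultimately show ?thesis by (rule reach_within_trans)
qed

lemma reach_within_common_prefix_zero:
  assumes "x \<in> V" "y \<in> V" "k < d" "clear_from k x = clear_from k y" "x ! k = 0"
  shows "reach_within V prefix_tree ((d - Suc k) + (d - k)) x y"
proof -
  have "reach_within V prefix_tree (d - Suc k) x (clear_from k x)"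
    using reach_within_clear_from[OF assms(1), of "Suc k"] assms(3,5) by (simp add: clear_from_Suc)
  moreover have "reach_within V prefix_tree (d - k) (clear_from k x) y"
    using assms(3,4) reach_within_sym[OF reach_within_clear_from[OF assms(2)]] by simp
  ultimately show ?thesis by (rule reach_within_trans)
qed

text \<open>If \<open>n\<^sub>1 = 2\<close>, one end of an edge in direction \<open>0\<close> has first coordinate \<open>0\<close>, which saves
  one step.\<close>

lemma prefix_tree_dist_le:
  assumes "{x, y} \<in> E"
  shows "graph_dist V prefix_tree x y \<le> (if ns ! 0 = 2 then 2 * d - 1 else 2 * d)"
proof -
  have xy: "x \<in> V" "y \<in> V" using assms hamming_E_iff by blast+
  obtain i where i: "i < d" "x ! i \<noteq> y ! i" and same: "\<And>j. j < d \<Longrightarrow> j \<noteq> i \<Longrightarrow> x ! j = y ! j"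
    using hamming_E_single_coordinate[OF assms] by blast
  have common: "clear_from i x = clear_from i y"
    using same i xy length_vertex by (intro clear_from_cong) auto
  show ?thesis
  proof (cases "ns ! 0 = 2 \<and> i = 0")
    case True
    have "x ! 0 < 2" "y ! 0 < 2" "x ! 0 \<noteq> y ! 0"
      using xy i True unfolding hamming_V_def by auto
    then have "x ! 0 = 0 \<or> y ! 0 = 0" by linarith
    then have "reach_within V prefix_tree ((d - 1) + (d - 0)) x y"
    proof
      assume "x ! 0 = 0"
      then show ?thesis using reach_within_common_prefix_zero[OF xy i(1) common] True by simp
    next
      assume "y ! 0 = 0"
      then show ?thesis
        using reach_within_sym[OF reach_within_common_prefix_zero[OF xy(2,1) i(1) common[symmetric]]]
          True by simp
    qed
    then have "graph_dist V prefix_tree x y \<le> (d - 1) + (d - 0)"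
      by (rule graph_dist_le_if_reach_within)
    with True show ?thesis by simp
  next
    case False
    have "graph_dist V prefix_tree x y \<le> (d - i) + (d - i)"
      using reach_within_common_prefix[OF xy _ common] i(1)
      by (intro graph_dist_le_if_reach_within) simp
    moreover have "ns ! 0 = 2 \<Longrightarrow> 1 \<le> i" using False by simp
    ultimately show ?thesis by auto
  qed
qed

end

section \<open>No spanning tree of smaller stretch\<close>

locale short_spanning_tree = hamming_graph ns + tree_graph "hamming_V ns" T
  for ns :: "nat list" and T :: "nat list set set" +
  fixes b :: nat
  assumes tree_subset: "T \<subseteq> hamming_E ns"
    and short_edges: "\<And>x y. {x, y} \<in> hamming_E ns \<Longrightarrow> graph_dist (hamming_V ns) T x y < b"
    and b_le: "b \<le> 2 * length ns"
begin

lemma hamming_dist_le_tree_dist: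
  assumes "x \<in> V" "y \<in> V"
  shows "hamming_dist ns x y \<le> tree_dist x y"
proof -
  obtain p where p: "is_path V T x y p" using is_path_exists assms by blast
  then have "walk V T p" "hd p = x" "last p = y" by (simp_all add: is_path_def)
  then have "hamming_dist ns x y \<le> length p - 1"
    using hamming_dist_le_walk_length[OF tree_subset] by metis
  then show ?thesis using length_is_path[OF p] by simp
qed

lemma two_le_b: "2 \<le> b"
proof -
  let ?z = "replicate d 0"
  have "{?z, ?z[0 := 1]} \<in> E" by (rule zeros_edge)
  then have "hamming_dist ns ?z (?z[0 := 1]) = 1" "?z \<in> V" "?z[0 := 1] \<in> V"
    by (simp_all add: hamming_E_iff)
  then have "1 \<le> tree_dist ?z (?z[0 := 1])"
    using hamming_dist_le_tree_dist[of ?z "?z[0 := 1]"] by simp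
  with short_edges[OF \<open>{?z, ?z[0 := 1]} \<in> E\<close>] show ?thesis by linarith
qed

text \<open>Otherwise \<open>v\<close> lies on the tree path between \<open>x\<close> and \<open>y\<close>, stretching that edge to \<open>b\<close>.\<close>

lemma branch_eq_if_far:
  assumes "v \<in> V" "x \<in> V" "y \<in> V" "x \<noteq> v" "y \<noteq> v" "{x, y} \<in> E"
    and "b \<le> tree_dist x v + tree_dist v y"
  shows "branch v x = branch v y"
proof (rule ccontr)
  assume "branch v x \<noteq> branch v y"
  then have "tree_dist x y = tree_dist x v + tree_dist v y"
    using assms by (intro tree_dist_through_branch_point)
  with short_edges[OF assms(6)] assms(7) show False by simp
qed

definition antipodal :: "nat list \<Rightarrow> nat list \<Rightarrow> bool" where
  "antipodal v x \<longleftrightarrow> x \<in> V \<and> (\<forall>i<d. x ! i \<noteq> v ! i)"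

lemma antipodal_neq: "antipodal v x \<Longrightarrow> x \<noteq> v"
  unfolding antipodal_def using length_pos by blast

lemma tree_dist_antipodal:
  assumes "v \<in> V" "antipodal v x"
  shows "d \<le> tree_dist v x" and "d \<le> tree_dist x v"
proof -
  have "x \<in> V" "hamming_dist ns v x = d"
    using assms(2) unfolding antipodal_def by (auto intro!: hamming_dist_eq_length)
  then show "d \<le> tree_dist v x" "d \<le> tree_dist x v"
    using hamming_dist_le_tree_dist[OF assms(1) \<open>x \<in> V\<close>]
      hamming_dist_le_tree_dist[OF \<open>x \<in> V\<close> assms(1)] hamming_dist_commute[of ns v x]
    by simp_all
qed

text \<open>All vertices antipodal to \<open>v\<close> lie in a single branch at \<open>v\<close>: they are joined by
  Hamming edges through antipodal vertices, and the two ends of each such edge are together at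
  distance at least \<open>2 d \<ge> b\<close> from \<open>v\<close>.\<close>

lemma branch_antipodal_eq:
  assumes v: "v \<in> V" and "antipodal v x" "antipodal v y"
  shows "branch v x = branch v y"
  using assms(2)
proof (induction "hamming_dist ns x y" arbitrary: x rule: less_induct)
  case less
  have xV: "x \<in> V" and yV: "y \<in> V" using less.prems assms(3) by (auto simp: antipodal_def)
  show ?case
  proof (cases "hamming_dist ns x y = 0")
    case True
    then show ?thesis using hamming_dist_eq_0_imp_eq xV yV by blast
  next
    case False
    then have "{j. j < d \<and> x ! j \<noteq> y ! j} \<noteq> {}"
      unfolding hamming_dist_def by (metis card.empty)
    then obtain j where j: "j < d" "x ! j \<noteq> y ! j" by blast
    define x' where "x' = x[j := y ! j]"
    have "x' \<in> V"
      unfolding x'_def using xV yV j by (intro list_update_in_hamming_V) (auto simp: hamming_V_def)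
    moreover have "x' ! k \<noteq> v ! k" if "k < d" for k
      using less.prems assms(3) that length_vertex[OF xV] unfolding antipodal_def x'_def
      by (cases "k = j") auto
    ultimately have x': "antipodal v x'" unfolding antipodal_def by blast
    have "hamming_dist ns x' y < hamming_dist ns x y"
      unfolding x'_def using length_vertex[OF xV] j by (rule hamming_dist_list_update_less)
    then have "branch v x' = branch v y" using less.hyps x' by blast
    moreover have "{x, x'} \<in> E"
      using xV \<open>x' \<in> V\<close> j length_vertex[OF xV]
      by (simp add: hamming_E_iff hamming_dist_list_update x'_def)
    then have "branch v x = branch v x'"
      using v xV \<open>x' \<in> V\<close> antipodal_neq[OF less.prems] antipodal_neq[OF x'] b_le
        tree_dist_antipodal(2)[OF v less.prems] tree_dist_antipodal(1)[OF v x']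
      by (intro branch_eq_if_far) auto
    ultimately show ?thesis by simp
  qed
qed

definition shift :: "nat list \<Rightarrow> nat list" where
  "shift v = map (\<lambda>i. Suc (v ! i) mod ns ! i) [0..<d]"

lemma antipodal_shift:
  assumes "v \<in> V"
  shows "antipodal v (shift v)"
  unfolding antipodal_def
proof (intro conjI allI impI)
  show "shift v \<in> V"
    unfolding hamming_V_def shift_def
    by (auto intro: mod_less_divisor dest!: factor_ge_2)
  fix i assume i: "i < d"
  have "v ! i < ns ! i" "2 \<le> ns ! i" using assms i factor_ge_2 by (auto simp: hamming_V_def)
  then show "shift v ! i \<noteq> v ! i" using i by (auto simp: shift_def mod_Suc)
qed

text \<open>Every vertex points to the neighbour through which it sees its antipodal vertices.\<close>

definition pointer :: "nat list \<Rightarrow> nat list" where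
  "pointer v = branch v (shift v)"

lemma pointer_edge:
  assumes "v \<in> V"
  shows "{v, pointer v} \<in> T" and "pointer v \<in> V"
  unfolding pointer_def
  using branch_edge assms antipodal_shift[OF assms] antipodal_neq
  by (auto simp: antipodal_def)

lemma pointer_single_coordinate:
  assumes "v \<in> V"
  obtains i where "i < d" "pointer v ! i \<noteq> v ! i"
    and "\<And>j. j < d \<Longrightarrow> j \<noteq> i \<Longrightarrow> pointer v ! j = v ! j"
proof -
  have "{v, pointer v} \<in> E" using pointer_edge(1)[OF assms] tree_subset by blast
  then obtain i where i: "i < d" "v ! i \<noteq> pointer v ! i"
    and other: "\<And>j. j < d \<Longrightarrow> j \<noteq> i \<Longrightarrow> v ! j = pointer v ! j"
    using hamming_E_single_coordinate by blast
  show thesis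
  proof (rule that[OF i(1)])
    show "pointer v ! i \<noteq> v ! i" using i(2) by simp
    show "pointer v ! j = v ! j" if "j < d" "j \<noteq> i" for j using other[OF that] by simp
  qed
qed

lemma pointer_pointer_neq_if_witness:
  assumes v: "v \<in> V" and "x \<noteq> v" "antipodal (pointer v) x" "branch v x = pointer v"
  shows "pointer (pointer v) \<noteq> v"
proof -
  have x: "x \<in> V" "x \<noteq> branch v x"
    using assms(3,4) antipodal_neq by (auto simp: antipodal_def)
  have "branch (branch v x) x \<noteq> v"
    by (rule branch_branch_neq[OF v x(1) assms(2) x(2)])
  moreover have w: "pointer v \<in> V" using v by (rule pointer_edge(2))
  then have "branch (pointer v) x = pointer (pointer v)"
    unfolding pointer_def[of "pointer v"]
    using assms(3) antipodal_shift[OF w] by (rule branch_antipodal_eq)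
  ultimately show ?thesis using assms(4) by simp
qed

text \<open>The witness is \<open>shift v\<close> with its \<open>i\<close>-th coordinate, where \<open>v\<close> and \<open>pointer v\<close> differ,
  replaced by a third value; it is antipodal to both \<open>v\<close> and \<open>pointer v\<close>.\<close>

lemma pointer_witness_if_factors_ge_3:
  assumes v: "v \<in> V" and factors: "\<And>i. i < d \<Longrightarrow> 3 \<le> ns ! i"
  shows "\<exists>x. x \<noteq> v \<and> antipodal (pointer v) x \<and> branch v x = pointer v"
proof -
  obtain i where i: "i < d" "pointer v ! i \<noteq> v ! i"
    and other: "\<And>j. j < d \<Longrightarrow> j \<noteq> i \<Longrightarrow> pointer v ! j = v ! j"
    using pointer_single_coordinate[OF v] by blast
  define c where "c = (if 0 \<notin> {v ! i, pointer v ! i} then 0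
    else if 1 \<notin> {v ! i, pointer v ! i} then 1 else (2::nat))"
  have c: "c \<noteq> v ! i" "c \<noteq> pointer v ! i" "c < ns ! i"
    using factors[OF i(1)] unfolding c_def by auto
  define x where "x = (shift v)[i := c]"
  have s: "antipodal v (shift v)" by (rule antipodal_shift[OF v])
  then have xV: "x \<in> V"
    unfolding x_def antipodal_def using i c by (auto intro: list_update_in_hamming_V)
  have len: "length (shift v) = d" by (simp add: shift_def)
  have "antipodal v x"
    using xV s c len i unfolding antipodal_def x_def by (auto simp: nth_list_update)
  then have "x \<noteq> v" "branch v x = pointer v"
    using antipodal_neq branch_antipodal_eq[OF v _ s] by (auto simp: pointer_def)
  moreover have "antipodal (pointer v) x"
    using xV s c len i other unfolding antipodal_def x_def by (auto simp: nth_list_update)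
  ultimately show ?thesis by blast
qed

text \<open>Now the \<open>i\<close>-th coordinate of \<open>shift v\<close> is reset to that of \<open>v\<close>. The witness is no longer
  antipodal to \<open>v\<close>, but it is adjacent to \<open>shift v\<close> and at distance \<open>d - 1\<close> from \<open>v\<close>, and
  \<open>d + (d - 1) \<ge> b\<close> keeps it in the branch of \<open>shift v\<close>.\<close>

lemma pointer_witness_if_b_le:
  assumes v: "v \<in> V" and b: "b \<le> 2 * d - 1"
  shows "\<exists>x. x \<noteq> v \<and> antipodal (pointer v) x \<and> branch v x = pointer v"
proof -
  obtain i where i: "i < d" "pointer v ! i \<noteq> v ! i"
    and other: "\<And>j. j < d \<Longrightarrow> j \<noteq> i \<Longrightarrow> pointer v ! j = v ! j"
    using pointer_single_coordinate[OF v] by blast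
  have "2 \<le> d" using two_le_b b by linarith
  then obtain j where j: "j < d" "j \<noteq> i" by (metis less_2_cases_iff less_le_trans not_less_eq)
  define x where "x = (shift v)[i := v ! i]"
  have s: "antipodal v (shift v)" by (rule antipodal_shift[OF v])
  have len: "length (shift v) = d" by (simp add: shift_def)
  have xV: "x \<in> V"
    unfolding x_def using s v i len
    by (intro list_update_in_hamming_V) (auto simp: antipodal_def hamming_V_def)
  have "x ! j \<noteq> v ! j" using s j len unfolding x_def antipodal_def by simp
  then have "x \<noteq> v" by blast
  have edge: "hamming_dist ns (shift v) x = 1"
    unfolding x_def using s i len by (intro hamming_dist_list_update) (auto simp: antipodal_def)
  have "hamming_dist ns v (shift v) = d"
    using s unfolding antipodal_def by (intro hamming_dist_eq_length) auto
  then have "d - 1 \<le> hamming_dist ns v x"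
    using hamming_dist_triangle[of ns v "shift v" x] edge hamming_dist_commute[of ns "shift v" x]
    by simp
  then have "d - 1 \<le> tree_dist v x"
    using hamming_dist_le_tree_dist[OF v xV] by simp
  moreover have "d \<le> tree_dist (shift v) v" using tree_dist_antipodal(2)[OF v s] .
  moreover have "{shift v, x} \<in> E"
    using s xV edge by (simp add: hamming_E_iff antipodal_def)
  ultimately have "branch v (shift v) = branch v x"
    using v xV s \<open>x \<noteq> v\<close> antipodal_neq[OF s] b
    by (intro branch_eq_if_far) (auto simp: antipodal_def)
  moreover have "antipodal (pointer v) x"
    using xV s i len other unfolding antipodal_def x_def by (auto simp: nth_list_update)
  ultimately show ?thesis using \<open>x \<noteq> v\<close> by (auto simp: pointer_def)
qed

text \<open>Following pointers never steps straight back, which is impossible in a finite tree.\<close>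

lemma short_spanning_tree_impossible:
  assumes "b \<le> 2 * d - 1 \<or> (\<forall>i<d. 3 \<le> ns ! i)"
  shows False
proof -
  have step: "pointer v \<in> V \<and> {v, pointer v} \<in> T \<and> pointer (pointer v) \<noteq> v" if "v \<in> V" for v
    using that assms pointer_edge pointer_witness_if_b_le pointer_witness_if_factors_ge_3
      pointer_pointer_neq_if_witness by metis
  define f where "f k = (pointer ^^ k) (replicate d 0)" for k
  have "f k \<in> V" for k
    by (induction k) (simp_all add: f_def zeros_in_V step)
  then have "f k \<in> V \<and> {f k, f (Suc k)} \<in> T \<and> f (Suc (Suc k)) \<noteq> f k" for k
    using step by (simp add: f_def)
  then show False
    using no_nonbacktracking_walk[OF finite_hamming_V] by blast
qed

end

context hamming_graph
begin

lemma short_spanning_tree_if_stretch_less: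
  assumes "spanning_tree V E T" and "stretch V E T < 2 * d"
  shows "short_spanning_tree ns T (stretch V E T + 1)"
proof unfold_locales
  show "is_tree V T" "T \<subseteq> E" using assms(1) by (simp_all add: spanning_tree_def)
  show "graph_dist V T x y < stretch V E T + 1" if "{x, y} \<in> E" for x y
    using graph_dist_le_stretch[OF finite_hamming_V hamming_E_subset_Pow that, where T = T]
    by simp
  show "stretch V E T + 1 \<le> 2 * d" using assms(2) by simp
qed

lemma stretch_lower_bound:
  assumes "spanning_tree V E T"
  shows "2 * d - 1 \<le> stretch V E T"
proof (rule ccontr)
  assume "\<not> 2 * d - 1 \<le> stretch V E T"
  then interpret short_spanning_tree ns T "stretch V E T + 1"
    using assms by (intro short_spanning_tree_if_stretch_less) auto
  show False using \<open>\<not> 2 * d - 1 \<le> stretch V E T\<close> by (intro short_spanning_tree_impossible) simp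
qed

lemma stretch_lower_bound_if_factors_ge_3:
  assumes "spanning_tree V E T" and "\<And>i. i < d \<Longrightarrow> 3 \<le> ns ! i"
  shows "2 * d \<le> stretch V E T"
proof (rule ccontr)
  assume "\<not> 2 * d \<le> stretch V E T"
  then interpret short_spanning_tree ns T "stretch V E T + 1"
    using assms(1) by (intro short_spanning_tree_if_stretch_less) auto
  show False using assms(2) by (intro short_spanning_tree_impossible) simp
qed

end

theorem theorem3p2:
  fixes ns :: "nat list"
  assumes "1 \<le> length ns"
    and "sorted ns"
    and "\<forall>i<length ns. 2 \<le> ns!i"
  shows "tree_stretch (hamming_V ns) (hamming_E ns) =
           (if ns!0 = 2 then 2 * length ns - 1 else 2 * length ns)"
proof -
  interpret hamming_graph ns using assms(1,3) by unfold_locales auto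
  have factors_ge_3: "3 \<le> ns ! i" if "ns ! 0 \<noteq> 2" "i < d" for i
    using that assms sorted_nth_mono[OF assms(2), of 0 i] by fastforce
  show ?thesis
  proof (rule tree_stretch_eqI[OF finite_hamming_E _ spanning_tree_prefix_tree])
    fix T assume "spanning_tree V E T"
    then show "(if ns ! 0 = 2 then 2 * d - 1 else 2 * d) \<le> stretch V E T"
      using stretch_lower_bound stretch_lower_bound_if_factors_ge_3 factors_ge_3 by simp
  next
    show "stretch V E prefix_tree \<le> (if ns ! 0 = 2 then 2 * d - 1 else 2 * d)"
      by (rule stretch_le[OF finite_hamming_V hamming_E_subset_Pow zeros_edge prefix_tree_dist_le])
  qed
qed

end
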